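(* Let $p^*\in(0,1)$ be the solution of $p^{(2-p)/(1-p)}=(1-p)^2$ and $\tau^*=(p^* )^{1/(1-p^* )}$. Let $\varepsilon\in[0,1)$ and $p=(1-\varepsilon)p^*$. Then for every integer $\ell\ge0$, \[ \int_{\tau^*}^1\frac{(1-(1-\varepsilon)t)^\ell}{t^{p^*}}\,dt\ \ge\ (1-p)^\ell . \] *)

theory Defs
  imports "HOL-Analysis.Analysis"
begin

end

theory Submission
  imports Defs
begin

(* Write q for p^* and \<tau> for \<tau>^*.  On [\<tau>, 1] the weight t^-q is a probability density:
   its mass is (1 - \<tau>^(1-q)) / (1 - q) = 1 and its mean is (1 - \<tau>^(2-q)) / (2 - q) = q,
   by the two equations defining q and \<tau>.  The convex map t \<mapsto> (1 - (1 - eps) t)^l lies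
   above its tangent line at the mean q, and integrating that line against the density gives
   its value at q, namely (1 - p)^l: this is Jensen's inequality for the density. *)

lemma power_ge_tangent_line:
  fixes x c :: real
  assumes "0 < c" and "0 \<le> x"
  shows "c ^ n + real n * c ^ (n - 1) * (x - c) \<le> x ^ n"
proof (cases n)
  case (Suc k)
  have "1 + real n * ((x - c) / c) \<le> (1 + (x - c) / c) ^ n"
    using assms by (intro Bernoulli_inequality) (simp add: field_simps)
  hence "c ^ n * (1 + real n * ((x - c) / c)) \<le> c ^ n * (1 + (x - c) / c) ^ n"
    using assms by (intro mult_left_mono) auto
  also have "c ^ n * (1 + (x - c) / c) ^ n = x ^ n"
  proof -
    have "1 + (x - c) / c = x / c" using assms by (simp add: field_simps)
    thus ?thesis using assms by (simp add: power_divide)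
  qed
  also have "c ^ n * (1 + real n * ((x - c) / c)) = c ^ n + real n * c ^ (n - 1) * (x - c)"
    using assms Suc by (simp add: distrib_left)
  finally show ?thesis .
qed simp

lemma has_integral_powr_atLeastAtMost:
  fixes a b r :: real
  assumes "0 < a" and "a \<le> b" and "r \<noteq> -1"
  shows "((\<lambda>t. t powr r) has_integral (b powr (r + 1) - a powr (r + 1)) / (r + 1)) {a..b}"
proof -
  have "((\<lambda>t. t powr (r + 1) / (r + 1)) has_vector_derivative t powr r) (at t within {a..b})"
    if "t \<in> {a..b}" for t
  proof -
    have "t > 0" using that assms by auto
    hence "((\<lambda>t. t powr (r + 1) / (r + 1)) has_real_derivative
             (r + 1) * t powr (r + 1 - 1) / (r + 1)) (at t)"
      by (intro DERIV_cdivide has_real_derivative_powr)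
    thus ?thesis
      using assms by (simp add: has_real_derivative_iff_has_vector_derivative[symmetric]
                                has_field_derivative_at_within)
  qed
  hence "((\<lambda>t. t powr r) has_integral b powr (r + 1) / (r + 1) - a powr (r + 1) / (r + 1)) {a..b}"
    using assms by (intro fundamental_theorem_of_calculus) auto
  thus ?thesis by (simp add: diff_divide_distrib)
qed

lemma integral_ge_supporting_line:
  fixes f w :: "real \<Rightarrow> real"
  assumes mass: "(w has_integral 1) S" and mean: "((\<lambda>t. t * w t) has_integral m) S"
    and int: "(\<lambda>t. f t * w t) integrable_on S"
    and below: "\<And>t. t \<in> S \<Longrightarrow> 0 \<le> w t \<and> \<alpha> + \<beta> * t \<le> f t"
  shows "\<alpha> + \<beta> * m \<le> integral S (\<lambda>t. f t * w t)"
proof -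
  have "((\<lambda>t. (\<alpha> + \<beta> * t) * w t) has_integral \<alpha> + \<beta> * m) S"
    using has_integral_add[OF has_integral_mult_right[OF mass, of \<alpha>]
                              has_integral_mult_right[OF mean, of \<beta>]]
    by (simp add: algebra_simps)
  thus ?thesis
    using int below by (intro has_integral_le[OF _ integrable_integral]) (auto intro: mult_right_mono)
qed

lemma critical_weight_moments:
  fixes p :: real
  assumes "0 < p" and "p < 1" and "p powr ((2 - p) / (1 - p)) = (1 - p)^2"
  defines "\<tau> \<equiv> p powr (1 / (1 - p))"
  shows "((\<lambda>t. t powr -p) has_integral 1) {\<tau>..1}"
    and "((\<lambda>t. t * t powr -p) has_integral p) {\<tau>..1}"
proof -
  have \<tau>: "0 < \<tau>" "\<tau> \<le> 1"
    using assms unfolding \<tau>_def by (auto intro: powr_le1)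
  have "\<tau> powr (1 - p) = p" and "\<tau> powr (2 - p) = (1 - p)^2"
    using assms unfolding \<tau>_def by (simp_all add: powr_powr)
  moreover have "(1 - (1 - p)^2) / (2 - p) = p"
    using assms by (simp add: field_simps power2_eq_square)
  ultimately have "((\<lambda>t. t powr -p) has_integral (1 - p) / (1 - p)) {\<tau>..1}"
    and mean: "((\<lambda>t. t powr (1 - p)) has_integral p) {\<tau>..1}"
    using has_integral_powr_atLeastAtMost[OF \<tau>, of "-p"]
          has_integral_powr_atLeastAtMost[OF \<tau>, of "1 - p"] assms
    by simp_all
  then show "((\<lambda>t. t powr -p) has_integral 1) {\<tau>..1}"
    using assms by simp
  have "t powr (1 - p) = t * t powr -p" if "t \<in> {\<tau>..1}" for t
    using that \<tau> by (simp add: powr_diff powr_minus divide_inverse)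
  then show "((\<lambda>t. t * t powr -p) has_integral p) {\<tau>..1}"
    using mean by (rule has_integral_eq)
qed

theorem mainTheorem12:
  fixes ps eps :: real and l :: nat
  assumes "0 < ps" and "ps < 1"
    and "ps powr ((2 - ps) / (1 - ps)) = (1 - ps)^2"
    and "0 \<le> eps" and "eps < 1"
  shows "integral {ps powr (1 / (1 - ps))..1} (\<lambda>t. (1 - (1 - eps) * t)^l / t powr ps)
           \<ge> (1 - (1 - eps) * ps)^l"
proof -
  define \<tau> where "\<tau> = ps powr (1 / (1 - ps))"
  define a where "a = 1 - eps"
  define c where "c = 1 - a * ps"
  define \<beta> where "\<beta> = - real l * c ^ (l - 1) * a"
  have \<tau>: "0 < \<tau>" "\<tau> \<le> 1"
    using assms unfolding \<tau>_def by (auto intro: powr_le1)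
  have a: "0 < a" "a \<le> 1"
    using assms unfolding a_def by auto
  have "0 < c"
    using assms a mult_right_mono[of a 1 ps] unfolding c_def by linarith
  have "c ^ l - \<beta> * ps + \<beta> * ps
          \<le> integral {\<tau>..1} (\<lambda>t. (1 - a * t)^l * t powr -ps)"
  proof (rule integral_ge_supporting_line)
    show "(\<lambda>t. (1 - a * t)^l * t powr -ps) integrable_on {\<tau>..1}"
      using \<tau> by (intro integrable_continuous_interval continuous_intros) auto
    fix t assume t: "t \<in> {\<tau>..1}"
    have "0 \<le> 1 - a * t"
      using t \<tau> a mult_mono[of a 1 t 1] by auto
    from power_ge_tangent_line[OF \<open>0 < c\<close> this, of l]
    show "0 \<le> t powr -ps \<and> c ^ l - \<beta> * ps + \<beta> * t \<le> (1 - a * t)^l"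
      unfolding \<beta>_def c_def by (simp add: algebra_simps)
  qed (use critical_weight_moments[OF assms(1-3)] in \<open>simp_all add: \<tau>_def\<close>)
  moreover have "(\<lambda>t. (1 - a * t)^l * t powr -ps) = (\<lambda>t. (1 - a * t)^l / t powr ps)"
    by (simp add: powr_minus divide_inverse)
  ultimately show ?thesis
    unfolding \<tau>_def a_def c_def by simp
qed

end
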